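(* For every constant $\delta>0$ there exists an instance of correlation clustering on a complete bipartite graph for which the ratio between the minimum cost of a clustering and the optimal value of the LP relaxation is at least $3-\delta$.
   Context: Complete bipartite correlation clustering: $V=V_1\cup V_2$ (disjoint); each pair in $V_1\times V_2$ is a positive edge ($E^+$) or negative edge ($E^-$); pairs inside $V_1$ or inside $V_2$ are not edges. The cost of a clustering (partition of $V$) is the number of positive edges with endpoints in different clusters plus the number of negative edges with endpoints in the same cluster. LP relaxation: variables $x_{uv}=x_{vu}\in[0,1]$ for all $u,v\in V$, $x_{uu}=0$, $x_{uv}+x_{vw}\ge x_{uw}$ for all $u,v,w\in V$; minimize $\sum_{E^+}x_{uv}+\sum_{E^-}(1-x_{uv})$. The integrality gap of an instance is the minimum clustering cost divided by the LP optimum. *)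

theory Defs
  imports Main "HOL-Library.Disjoint_Sets" "HOL-Analysis.Analysis"
begin

text \<open>Each edge is represented once as (u,v)
  with u \<in> V1, v \<in> V2.\<close>

definition bcc_instance :: "nat set \<Rightarrow> nat set \<Rightarrow> (nat \<times> nat) set \<Rightarrow> bool" where
  "bcc_instance V1 V2 Ep \<longleftrightarrow> finite V1 \<and> finite V2 \<and> V1 \<inter> V2 = {} \<and> Ep \<subseteq> V1 \<times> V2"

definition neg_edges :: "nat set \<Rightarrow> nat set \<Rightarrow> (nat \<times> nat) set \<Rightarrow> (nat \<times> nat) set" where
  "neg_edges V1 V2 Ep = (V1 \<times> V2) - Ep"

definition same_cluster :: "nat set set \<Rightarrow> nat \<Rightarrow> nat \<Rightarrow> bool" where
  "same_cluster P u v \<longleftrightarrow> (\<exists>C\<in>P. u \<in> C \<and> v \<in> C)"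

definition cc_cost :: "nat set \<Rightarrow> nat set \<Rightarrow> (nat \<times> nat) set \<Rightarrow> nat set set \<Rightarrow> real" where
  "cc_cost V1 V2 Ep P =
     real (card {(u,v) \<in> Ep. \<not> same_cluster P u v})
   + real (card {(u,v) \<in> neg_edges V1 V2 Ep. same_cluster P u v})"

definition min_cc_cost :: "nat set \<Rightarrow> nat set \<Rightarrow> (nat \<times> nat) set \<Rightarrow> real" where
  "min_cc_cost V1 V2 Ep = Inf {cc_cost V1 V2 Ep P | P. partition_on (V1 \<union> V2) P}"

definition lp_feasible :: "nat set \<Rightarrow> (nat \<Rightarrow> nat \<Rightarrow> real) \<Rightarrow> bool" where
  "lp_feasible V x \<longleftrightarrow>
     (\<forall>u\<in>V. \<forall>v\<in>V. x u v = x v u \<and> 0 \<le> x u v \<and> x u v \<le> 1) \<and>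
     (\<forall>u\<in>V. x u u = 0) \<and>
     (\<forall>u\<in>V. \<forall>v\<in>V. \<forall>w\<in>V. x u v + x v w \<ge> x u w)"

definition lp_obj :: "nat set \<Rightarrow> nat set \<Rightarrow> (nat \<times> nat) set \<Rightarrow> (nat \<Rightarrow> nat \<Rightarrow> real) \<Rightarrow> real" where
  "lp_obj V1 V2 Ep x = (\<Sum>(u,v)\<in>Ep. x u v) + (\<Sum>(u,v)\<in>neg_edges V1 V2 Ep. 1 - x u v)"

definition lp_opt :: "nat set \<Rightarrow> nat set \<Rightarrow> (nat \<times> nat) set \<Rightarrow> real" where
  "lp_opt V1 V2 Ep = Inf {lp_obj V1 V2 Ep x | x. lp_feasible (V1 \<union> V2) x}"

end

theory Submission
  imports Defs
begin

text \<open>Take the positive edges to form a bipartite graph without 4-cycles, with n vertices and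
  e edges. Scaling its graph distance by 1/3 and capping at 1 gives an LP solution of value e/3:
  positive edges pay 1/3 each, and negative edges join vertices at distance at least 3. On the
  other hand, a cluster with a and b vertices on the two sides contains at most (ab + 4a + 2b)/2
  positive edges, because two left vertices share at most one neighbour; so clustering gains at
  most 4n over cutting every positive edge, and every clustering costs at least e - 4n. Since
  sums of two powers of two determine their summands, joining i to i + 2^k (k < m) gives such
  graphs with n = 3 * 2^m and e = m * 2^m, whence a ratio of at least 3 - 36/m.\<close>

lemma two_power_sums_eq_one:
  assumes "1 + (2::nat) ^ d = 2 ^ b + 2 ^ c"
  shows "(b = 0 \<and> d = c) \<or> (c = 0 \<and> d = b)"
proof (cases "b = 0 \<or> c = 0")
  case True
  with assms show ?thesis by auto
next
  case False
  then have "(2::nat) ^ b \<ge> 2" "(2::nat) ^ c \<ge> 2"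
    using self_le_power[of 2] by auto
  have "d \<noteq> 0"
  proof
    assume "d = 0"
    with assms have "(2::nat) ^ b + 2 ^ c = 2" by simp
    with \<open>(2::nat) ^ b \<ge> 2\<close> \<open>(2::nat) ^ c \<ge> 2\<close> show False by linarith
  qed
  then have "odd ((2::nat) ^ b + 2 ^ c)" by (simp flip: assms)
  with False show ?thesis by simp
qed

lemma two_power_sums_eq:
  assumes "(2::nat) ^ a + 2 ^ d = 2 ^ b + 2 ^ c"
  shows "(a = b \<and> d = c) \<or> (a = c \<and> d = b)"
  using assms
proof (induction a arbitrary: b c d)
  case 0
  then show ?case using two_power_sums_eq_one[of d b c] by auto
next
  case (Suc a)
  consider "d = 0" | "b = 0" | "c = 0" | d' b' c' where "d = Suc d'" "b = Suc b'" "c = Suc c'"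
    by (meson not0_implies_Suc)
  then show ?case
  proof cases
    case 1
    then show ?thesis using two_power_sums_eq_one[of "Suc a" b c] Suc.prems by (auto simp: add.commute)
  next
    case 2
    then show ?thesis using two_power_sums_eq_one[of c "Suc a" d] Suc.prems by (auto simp: add.commute)
  next
    case 3
    then show ?thesis using two_power_sums_eq_one[of b "Suc a" d] Suc.prems by (auto simp: add.commute)
  next
    case 4
    with Suc.prems have "(2::nat) ^ a + 2 ^ d' = 2 ^ b' + 2 ^ c'" by simp
    with 4 show ?thesis using Suc.IH by auto
  qed
qed

definition c4_free :: "('a \<times> 'b) set \<Rightarrow> bool" where
  "c4_free E \<longleftrightarrow>
     (\<forall>u u' w w'. u \<noteq> u' \<and> (u, w) \<in> E \<and> (u', w) \<in> E \<and> (u, w') \<in> E \<and> (u', w') \<in> E \<longrightarrow> w = w')"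

lemma card_Times_self_Diff_Id:
  assumes "finite X"
  shows "card (X \<times> X - Id) = card X * (card X - 1)"
proof -
  have "X \<times> X \<inter> Id = (\<lambda>x. (x, x)) ` X" by auto
  then have "card (X \<times> X \<inter> Id) = card X" by (simp add: card_image inj_on_def)
  then show ?thesis
    using assms by (simp add: card_Diff_subset_Int card_cartesian_product diff_mult_distrib2)
qed

lemma card_edges_eq_sum_degrees:
  assumes "finite A" "finite B"
  shows "card (E \<inter> A \<times> B) = (\<Sum>v\<in>B. card {u \<in> A. (u, v) \<in> E})"
proof -
  have "E \<inter> A \<times> B = (\<Union>v\<in>B. {u \<in> A. (u, v) \<in> E} \<times> {v})" by auto
  also have "card \<dots> = (\<Sum>v\<in>B. card ({u \<in> A. (u, v) \<in> E} \<times> {v}))"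
    using assms by (intro card_UN_disjoint) auto
  finally show ?thesis by (simp add: card_cartesian_product)
qed

lemma c4_free_sum_degree_pairs_le:
  assumes "finite A" "finite B" "c4_free E"
  shows "(\<Sum>v\<in>B. card {u \<in> A. (u, v) \<in> E} * (card {u \<in> A. (u, v) \<in> E} - 1))
           \<le> card A * (card A - 1)"
proof -
  define N where "N v = {u \<in> A. (u, v) \<in> E}" for v
  define S where "S = (SIGMA v:B. N v \<times> N v - Id)"
  have "card S = (\<Sum>v\<in>B. card (N v) * (card (N v) - 1))"
    using assms(1,2) by (simp add: S_def N_def card_Times_self_Diff_Id)
  moreover have "card S \<le> card (A \<times> A - Id)"
  proof (rule card_inj_on_le)
    show "inj_on snd S"
      using assms(3) by (auto simp: inj_on_def S_def N_def c4_free_def)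
    show "snd ` S \<subseteq> A \<times> A - Id" by (auto simp: S_def N_def)
  qed (use assms in simp)
  ultimately show ?thesis using assms(1) by (simp add: N_def card_Times_self_Diff_Id)
qed

lemma two_mult_le_sq_add_four_pairs:
  fixes a d :: nat
  assumes "d \<le> a"
  shows "2 * a * d \<le> a * a + 4 * (d * (d - 1)) + 2 * a"
proof -
  have "int (2 * a * d) \<le> int (a * a + d * d)"
    using zero_le_power2[of "int a - int d"] by (simp add: power2_eq_square algebra_simps)
  then have "2 * a * d \<le> a * a + d * d" by (simp only: of_nat_le_iff)
  moreover have "d * d \<le> 4 * (d * (d - 1)) + 2 * a"
  proof (cases "d \<le> 1")
    case True
    then have "d * d \<le> d" by (cases d) auto
    with assms show ?thesis by linarith
  next
    case False
    then have "d * d \<le> d * (2 * (d - 1))" by (intro mult_le_mono2) linarith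
    then show ?thesis by linarith
  qed
  ultimately show ?thesis by linarith
qed

lemma c4_free_card_edges_le:
  assumes "finite A" "finite B" "c4_free E"
  shows "2 * card (E \<inter> A \<times> B) \<le> card A * card B + 4 * card A + 2 * card B"
proof (cases "A = {}")
  case True
  then show ?thesis by simp
next
  case False
  define a where "a = card A"
  define b where "b = card B"
  define deg where "deg v = card {u \<in> A. (u, v) \<in> E}" for v
  have "a > 0" using False assms(1) by (simp add: a_def card_gt_0_iff)
  have deg_le: "deg v \<le> a" for v
    unfolding deg_def a_def using assms(1) by (intro card_mono) auto
  have "a * (2 * card (E \<inter> A \<times> B)) = (\<Sum>v\<in>B. 2 * a * deg v)"
    using assms(1,2) by (simp add: card_edges_eq_sum_degrees deg_def sum_distrib_left ac_simps)
  also have "\<dots> \<le> (\<Sum>v\<in>B. a * a + 4 * (deg v * (deg v - 1)) + 2 * a)"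
    by (intro sum_mono two_mult_le_sq_add_four_pairs deg_le)
  also have "\<dots> = a * a * b + 4 * (\<Sum>v\<in>B. deg v * (deg v - 1)) + 2 * a * b"
    by (simp add: sum.distrib sum_distrib_left b_def)
  also have "\<dots> \<le> a * a * b + 4 * (a * (a - 1)) + 2 * a * b"
    using c4_free_sum_degree_pairs_le[OF assms] by (simp add: deg_def a_def)
  also have "\<dots> \<le> a * (a * b + 4 * a + 2 * b)"
    by (simp add: algebra_simps diff_mult_distrib2)
  finally show ?thesis
    using \<open>a > 0\<close> by (simp add: a_def b_def)
qed

lemma cc_cost_eq_sum_clusters:
  assumes inst: "bcc_instance V1 V2 Ep" and P: "partition_on (V1 \<union> V2) P"
  shows "cc_cost V1 V2 Ep P = real (card Ep)
           - (\<Sum>C\<in>P. 2 * real (card (Ep \<inter> C \<times> C)) - real (card (C \<inter> V1) * card (C \<inter> V2)))"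
proof -
  have fin: "finite V1" "finite V2" and EV: "Ep \<subseteq> V1 \<times> V2"
    using inst by (auto simp: bcc_instance_def)
  have "finite Ep" using fin EV finite_subset by blast
  have "finite P" using fin P finite_elements by blast
  have fin_C: "finite C" if "C \<in> P" for C
    using fin P that by (metis Union_upper finite_Un partition_onD1 rev_finite_subset)
  have disj: "C \<inter> C' = {}" if "C \<in> P" "C' \<in> P" "C \<noteq> C'" for C C'
    using partition_onD2[OF P] that by (auto simp: disjoint_def)
  have pos_in: "{(u, v) \<in> Ep. same_cluster P u v} = (\<Union>C\<in>P. Ep \<inter> C \<times> C)"
    by (auto simp: same_cluster_def)
  have card_pos_in: "card {(u, v) \<in> Ep. same_cluster P u v} = (\<Sum>C\<in>P. card (Ep \<inter> C \<times> C))"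
    unfolding pos_in using \<open>finite P\<close> fin_C disj by (intro card_UN_disjoint) blast+
  have "card {(u, v) \<in> Ep. \<not> same_cluster P u v}
          = card Ep - card {(u, v) \<in> Ep. same_cluster P u v}"
    using \<open>finite Ep\<close>
    by (subst card_Diff_subset[symmetric]) (auto intro: arg_cong[where f = card] rev_finite_subset)
  moreover have "card {(u, v) \<in> Ep. same_cluster P u v} \<le> card Ep"
    using \<open>finite Ep\<close> by (intro card_mono) auto
  ultimately have pos_cut: "real (card {(u, v) \<in> Ep. \<not> same_cluster P u v})
                        = real (card Ep) - (\<Sum>C\<in>P. real (card (Ep \<inter> C \<times> C)))"
    by (simp add: card_pos_in of_nat_diff)
  have neg_in: "{(u, v) \<in> neg_edges V1 V2 Ep. same_cluster P u v}
                  = (\<Union>C\<in>P. (C \<inter> V1) \<times> (C \<inter> V2) - Ep \<inter> C \<times> C)"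
    by (auto simp: same_cluster_def neg_edges_def)
  have card_neg_C: "card ((C \<inter> V1) \<times> (C \<inter> V2) - Ep \<inter> C \<times> C)
                      = card (C \<inter> V1) * card (C \<inter> V2) - card (Ep \<inter> C \<times> C)" if "C \<in> P" for C
    using fin_C[OF that] EV by (subst card_Diff_subset) (auto simp: card_cartesian_product)
  have "card (Ep \<inter> C \<times> C) \<le> card (C \<inter> V1) * card (C \<inter> V2)" if "C \<in> P" for C
    using fin_C[OF that] EV card_mono[of "(C \<inter> V1) \<times> (C \<inter> V2)" "Ep \<inter> C \<times> C"]
    by (auto simp: card_cartesian_product)
  moreover have "card (\<Union>C\<in>P. (C \<inter> V1) \<times> (C \<inter> V2) - Ep \<inter> C \<times> C)
      = (\<Sum>C\<in>P. card ((C \<inter> V1) \<times> (C \<inter> V2) - Ep \<inter> C \<times> C))"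
    by (rule card_UN_disjoint) (use \<open>finite P\<close> fin_C disj in blast)+
  ultimately have neg_same: "real (card {(u, v) \<in> neg_edges V1 V2 Ep. same_cluster P u v})
      = (\<Sum>C\<in>P. real (card (C \<inter> V1) * card (C \<inter> V2)) - real (card (Ep \<inter> C \<times> C)))"
    unfolding neg_in by (auto simp: card_neg_C of_nat_diff of_nat_sum intro!: sum.cong)
  show ?thesis
    unfolding cc_cost_def pos_cut neg_same by (simp add: sum_subtractf sum_distrib_left sum_negf)
qed

lemma cc_cost_ge_card_edges_minus:
  assumes inst: "bcc_instance V1 V2 Ep" and "c4_free Ep" and P: "partition_on (V1 \<union> V2) P"
  shows "real (card Ep) - 4 * real (card (V1 \<union> V2)) \<le> cc_cost V1 V2 Ep P"
proof -
  have fin: "finite V1" "finite V2" "V1 \<inter> V2 = {}" and EV: "Ep \<subseteq> V1 \<times> V2"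
    using inst by (auto simp: bcc_instance_def)
  have C_sub: "C \<subseteq> V1 \<union> V2" if "C \<in> P" for C
    using P that by (auto simp: partition_on_def)
  have fin_C: "finite C" if "C \<in> P" for C
    using C_sub[OF that] fin finite_subset by blast
  have cluster: "2 * real (card (Ep \<inter> C \<times> C)) - real (card (C \<inter> V1) * card (C \<inter> V2))
                   \<le> 4 * real (card C)" if "C \<in> P" for C
  proof -
    have "Ep \<inter> C \<times> C = Ep \<inter> (C \<inter> V1) \<times> (C \<inter> V2)" using EV by blast
    then have "2 * card (Ep \<inter> C \<times> C)
                 \<le> card (C \<inter> V1) * card (C \<inter> V2) + 4 * card (C \<inter> V1) + 2 * card (C \<inter> V2)"
      using c4_free_card_edges_le[OF _ _ \<open>c4_free Ep\<close>] fin_C[OF that] by simp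
    moreover have "C = (C \<inter> V1) \<union> (C \<inter> V2)" using C_sub[OF that] by blast
    then have "card C = card (C \<inter> V1) + card (C \<inter> V2)"
      using fin_C[OF that] fin(3) by (metis card_Un_disjoint disjoint_iff finite_Int IntD2)
    ultimately show ?thesis by linarith
  qed
  have "card (V1 \<union> V2) = (\<Sum>C\<in>P. card C)"
    using card_Union_disjoint[OF partition_onD2[OF P] fin_C] partition_onD1[OF P] by simp
  then have "(\<Sum>C\<in>P. 2 * real (card (Ep \<inter> C \<times> C)) - real (card (C \<inter> V1) * card (C \<inter> V2)))
               \<le> 4 * real (card (V1 \<union> V2))"
    using sum_mono[of P _ "\<lambda>C. 4 * real (card C)", OF cluster] by (simp add: sum_distrib_left)
  then show ?thesis
    using cc_cost_eq_sum_clusters[OF inst P] by linarith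
qed

lemma min_cc_cost_ge_card_edges_minus:
  assumes "bcc_instance V1 V2 Ep" "c4_free Ep"
  shows "real (card Ep) - 4 * real (card (V1 \<union> V2)) \<le> min_cc_cost V1 V2 Ep"
  unfolding min_cc_cost_def
proof (rule cInf_greatest)
  show "{cc_cost V1 V2 Ep P |P. partition_on (V1 \<union> V2) P} \<noteq> {}"
    using partition_on_singletons by blast
qed (use cc_cost_ge_card_edges_minus[OF assms] in blast)

definition adjacent :: "('a \<times> 'a) set \<Rightarrow> 'a \<Rightarrow> 'a \<Rightarrow> bool" where
  "adjacent E u v \<longleftrightarrow> (u, v) \<in> E \<or> (v, u) \<in> E"

definition capped_third_dist :: "(nat \<times> nat) set \<Rightarrow> nat \<Rightarrow> nat \<Rightarrow> real" where
  "capped_third_dist E u v =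
     (if u = v then 0
      else if adjacent E u v then 1/3
      else if \<exists>w. adjacent E u w \<and> adjacent E w v then 2/3
      else 1)"

lemma capped_third_dist_triangle:
  "capped_third_dist E u w \<le> capped_third_dist E u v + capped_third_dist E v w"
proof (cases "u = w \<or> v = u \<or> v = w")
  case True
  then show ?thesis by (auto simp: capped_third_dist_def)
next
  case False
  show ?thesis
  proof (cases "adjacent E u v \<and> adjacent E v w")
    case True
    with False show ?thesis by (auto simp: capped_third_dist_def)
  next
    case not_path: False
    have "capped_third_dist E u v + capped_third_dist E v w \<ge> 1"
      using False not_path by (auto simp: capped_third_dist_def)
    then show ?thesis by (simp add: capped_third_dist_def)
  qed
qed

lemma lp_feasible_capped_third_dist: "lp_feasible V (capped_third_dist E)"
proof -
  have "capped_third_dist E u v = capped_third_dist E v u" for u v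
    by (auto simp: capped_third_dist_def adjacent_def)
  then show ?thesis
    using capped_third_dist_triangle
    by (auto simp: lp_feasible_def capped_third_dist_def)
qed

lemma lp_obj_nonneg:
  assumes "bcc_instance V1 V2 Ep" "lp_feasible (V1 \<union> V2) x"
  shows "0 \<le> lp_obj V1 V2 Ep x"
  using assms unfolding lp_obj_def
  by (intro add_nonneg_nonneg sum_nonneg) (auto simp: lp_feasible_def neg_edges_def bcc_instance_def)

lemma lp_obj_capped_third_dist:
  assumes "bcc_instance V1 V2 Ep"
  shows "lp_obj V1 V2 Ep (capped_third_dist Ep) = real (card Ep) / 3"
proof -
  have disj: "V1 \<inter> V2 = {}" and EV: "Ep \<subseteq> V1 \<times> V2"
    using assms by (auto simp: bcc_instance_def)
  have pos: "capped_third_dist Ep u v = 1/3" if "(u, v) \<in> Ep" for u v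
    using that EV disj by (auto simp: capped_third_dist_def adjacent_def)
  have neg: "capped_third_dist Ep u v = 1" if "(u, v) \<in> neg_edges V1 V2 Ep" for u v
  proof -
    have "u \<in> V1" "v \<in> V2" "(u, v) \<notin> Ep" using that by (auto simp: neg_edges_def)
    moreover have "\<not> adjacent Ep u w \<or> \<not> adjacent Ep w v" for w
      using calculation EV disj by (auto simp: adjacent_def)
    ultimately show ?thesis
      using EV disj by (auto simp: capped_third_dist_def adjacent_def)
  qed
  have "(\<Sum>(u, v)\<in>Ep. capped_third_dist Ep u v) = (\<Sum>_\<in>Ep. 1/3)"
    by (intro sum.cong) (auto simp: pos)
  moreover have "(\<Sum>(u, v)\<in>neg_edges V1 V2 Ep. 1 - capped_third_dist Ep u v) = 0"
    by (intro sum.neutral) (auto simp: neg)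
  ultimately show ?thesis
    unfolding lp_obj_def by simp
qed

lemma lp_opt_le_card_div_3:
  assumes "bcc_instance V1 V2 Ep"
  shows "lp_opt V1 V2 Ep \<le> real (card Ep) / 3"
proof -
  have "lp_opt V1 V2 Ep \<le> lp_obj V1 V2 Ep (capped_third_dist Ep)"
    unfolding lp_opt_def using lp_feasible_capped_third_dist lp_obj_nonneg[OF assms]
    by (intro cInf_lower) (auto simp: bdd_below_def)
  then show ?thesis using lp_obj_capped_third_dist[OF assms] by simp
qed

text \<open>Along a path u1 w1 u2 w2 whose ends are joined by a negative edge, the triangle
  inequality forces the four LP terms of these edges to sum to at least 1.\<close>
lemma lp_opt_ge_one:
  assumes inst: "bcc_instance V1 V2 Ep"
    and path: "(u1, w1) \<in> Ep" "(u2, w1) \<in> Ep" "(u2, w2) \<in> Ep" and neg: "(u1, w2) \<notin> Ep"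
  shows "1 \<le> lp_opt V1 V2 Ep"
  unfolding lp_opt_def
proof (rule cInf_greatest)
  show "{lp_obj V1 V2 Ep x |x. lp_feasible (V1 \<union> V2) x} \<noteq> {}"
    using lp_feasible_capped_third_dist by blast
next
  fix y assume "y \<in> {lp_obj V1 V2 Ep x |x. lp_feasible (V1 \<union> V2) x}"
  then obtain x where y: "y = lp_obj V1 V2 Ep x" and x: "lp_feasible (V1 \<union> V2) x" by blast
  have fin: "finite V1" "finite V2" and EV: "Ep \<subseteq> V1 \<times> V2"
    using inst by (auto simp: bcc_instance_def)
  then have "finite Ep" using finite_subset by blast
  have V: "u1 \<in> V1" "u2 \<in> V1" "w1 \<in> V2" "w2 \<in> V2" using path EV by auto
  have distinct: "u1 \<noteq> u2" "w1 \<noteq> w2" using path neg by auto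
  have "x u1 w1 + x u2 w1 + x u2 w2 = (\<Sum>(u, v)\<in>{(u1, w1), (u2, w1), (u2, w2)}. x u v)"
    using distinct by simp
  also have "\<dots> \<le> (\<Sum>(u, v)\<in>Ep. x u v)"
    using x EV path \<open>finite Ep\<close> by (intro sum_mono2) (auto simp: lp_feasible_def)
  finally have pos: "x u1 w1 + x u2 w1 + x u2 w2 \<le> (\<Sum>(u, v)\<in>Ep. x u v)" .
  have "1 - x u1 w2 \<le> (\<Sum>(u, v)\<in>neg_edges V1 V2 Ep. 1 - x u v)"
    using member_le_sum[of "(u1, w2)" "neg_edges V1 V2 Ep" "\<lambda>(u, v). 1 - x u v"]
      x EV V neg fin by (auto simp: lp_feasible_def neg_edges_def)
  moreover have "x u1 u2 \<le> x u1 w1 + x w1 u2" "x u1 w2 \<le> x u1 u2 + x u2 w2" "x w1 u2 = x u2 w1"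
    using x V unfolding lp_feasible_def by blast+
  ultimately show "1 \<le> y" unfolding y lp_obj_def using pos by linarith
qed

lemma integrality_gap_ge:
  assumes inst: "bcc_instance V1 V2 Ep" and "c4_free Ep" and "0 < lp_opt V1 V2 Ep"
    and dense: "4 * card (V1 \<union> V2) \<le> card Ep"
  shows "3 - 12 * real (card (V1 \<union> V2)) / real (card Ep) \<le> min_cc_cost V1 V2 Ep / lp_opt V1 V2 Ep"
proof -
  define n e where "n = real (card (V1 \<union> V2))" and "e = real (card Ep)"
  have L: "0 < lp_opt V1 V2 Ep" "lp_opt V1 V2 Ep \<le> e / 3"
    using assms lp_opt_le_card_div_3[OF inst] by (simp_all add: e_def)
  have M: "0 \<le> e - 4 * n" "e - 4 * n \<le> min_cc_cost V1 V2 Ep"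
    using dense min_cc_cost_ge_card_edges_minus[OF inst \<open>c4_free Ep\<close>] by (simp_all add: n_def e_def)
  have "3 - 12 * n / e = (e - 4 * n) / (e / 3)"
    using L by (simp add: field_simps)
  also have "\<dots> \<le> (e - 4 * n) / lp_opt V1 V2 Ep"
    using L M by (intro divide_left_mono) auto
  also have "\<dots> \<le> min_cc_cost V1 V2 Ep / lp_opt V1 V2 Ep"
    using L M by (intro divide_right_mono) auto
  finally show ?thesis by (simp add: n_def e_def)
qed

definition sidon_graph :: "nat \<Rightarrow> (nat \<times> nat) set" where
  "sidon_graph m = (\<lambda>(i, k). (i, 2 ^ m + i + 2 ^ k)) ` ({..<2 ^ m} \<times> {..<m})"

lemma mem_sidon_graph: "(u, w) \<in> sidon_graph m \<longleftrightarrow> u < 2 ^ m \<and> (\<exists>k<m. w = 2 ^ m + u + 2 ^ k)"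
  unfolding sidon_graph_def by auto

lemma bcc_instance_sidon_graph: "bcc_instance {..<2 ^ m} {2 ^ m..<3 * 2 ^ m} (sidon_graph m)"
proof -
  have "u + (2::nat) ^ k < 2 * 2 ^ m" if "k < m" "u < 2 ^ m" for u k
  proof -
    have "(2::nat) ^ k < 2 ^ m" using that(1) by simp
    with that(2) show ?thesis by linarith
  qed
  then show ?thesis
    unfolding bcc_instance_def by (auto simp: mem_sidon_graph)
qed

lemma card_sidon_graph: "card (sidon_graph m) = 2 ^ m * m"
proof -
  have "inj_on (\<lambda>(i, k). (i, (2::nat) ^ m + i + 2 ^ k)) ({..<2 ^ m} \<times> {..<m})"
    by (auto simp: inj_on_def)
  then show ?thesis
    unfolding sidon_graph_def by (simp add: card_image card_cartesian_product)
qed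

lemma c4_free_sidon_graph: "c4_free (sidon_graph m)"
  unfolding c4_free_def
proof (intro allI impI)
  fix u u' w w'
  assume "u \<noteq> u' \<and> (u, w) \<in> sidon_graph m \<and> (u', w) \<in> sidon_graph m
            \<and> (u, w') \<in> sidon_graph m \<and> (u', w') \<in> sidon_graph m"
  then have "u \<noteq> u'" and edges: "(u, w) \<in> sidon_graph m" "(u', w) \<in> sidon_graph m"
    "(u, w') \<in> sidon_graph m" "(u', w') \<in> sidon_graph m" by auto
  obtain a b c d where w: "w = 2 ^ m + u + 2 ^ a" "w = 2 ^ m + u' + 2 ^ b"
    and w': "w' = 2 ^ m + u + 2 ^ c" "w' = 2 ^ m + u' + 2 ^ d"
    using edges unfolding mem_sidon_graph by metis
  then have "(2::nat) ^ a + 2 ^ d = 2 ^ b + 2 ^ c" by linarith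
  with \<open>u \<noteq> u'\<close> w w' show "w = w'"
    using two_power_sums_eq by fastforce
qed

lemma lp_opt_sidon_graph_ge_one:
  assumes "2 \<le> m"
  shows "1 \<le> lp_opt {..<2 ^ m} {2 ^ m..<3 * 2 ^ m} (sidon_graph m)"
proof (rule lp_opt_ge_one[OF bcc_instance_sidon_graph])
  have "(2::nat) < 2 ^ m" using power_strict_increasing[of 1 m 2] assms by simp
  then show "(1, 2 ^ m + 2) \<in> sidon_graph m" "(0, 2 ^ m + 2) \<in> sidon_graph m"
    "(0, 2 ^ m + 1) \<in> sidon_graph m"
    using assms by (auto simp: mem_sidon_graph intro: exI[of _ 0] exI[of _ 1])
  show "(1, 2 ^ m + 1) \<notin> sidon_graph m" by (simp add: mem_sidon_graph)
qed

theorem theorem4: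
  fixes \<delta> :: real
  assumes "\<delta> > 0"
  shows "\<exists>V1 V2 Ep. bcc_instance V1 V2 Ep \<and> lp_opt V1 V2 Ep > 0 \<and>
           min_cc_cost V1 V2 Ep / lp_opt V1 V2 Ep \<ge> 3 - \<delta>"
proof -
  define m where "m = nat \<lceil>36 / \<delta>\<rceil> + 12"
  define V1 V2 where "V1 = {..<(2::nat) ^ m}" and "V2 = {(2::nat) ^ m..<3 * 2 ^ m}"
  have inst: "bcc_instance V1 V2 (sidon_graph m)"
    unfolding V1_def V2_def by (rule bcc_instance_sidon_graph)
  have lp_pos: "lp_opt V1 V2 (sidon_graph m) > 0"
    using lp_opt_sidon_graph_ge_one[of m] by (simp add: m_def V1_def V2_def)
  have card_V: "card (V1 \<union> V2) = 3 * 2 ^ m"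
    unfolding V1_def V2_def by (simp add: ivl_disj_un_one(2))
  have "12 \<le> m" "36 / \<delta> \<le> real m" unfolding m_def by linarith+
  then have "36 / real m \<le> \<delta>"
    using assms by (simp add: field_simps)
  moreover have "3 - 12 * real (card (V1 \<union> V2)) / real (card (sidon_graph m)) = 3 - 36 / real m"
    unfolding card_V card_sidon_graph by simp
  moreover have "4 * card (V1 \<union> V2) \<le> card (sidon_graph m)"
    unfolding card_V card_sidon_graph using \<open>12 \<le> m\<close> by simp
  ultimately have "3 - \<delta> \<le> min_cc_cost V1 V2 (sidon_graph m) / lp_opt V1 V2 (sidon_graph m)"
    using integrality_gap_ge[OF inst c4_free_sidon_graph lp_pos] by linarith
  with inst lp_pos show ?thesis by blast
qed

end
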